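(* Let $\mathcal K$ and $\mathcal K_\sigma$ be weighted simplicial complexes on a finite vertex set such that $\mathcal K_\sigma=\mathcal K\cup\{\sigma\}$, where $\sigma\notin\mathcal K$ is a $k$-simplex, the weight function $w$ of $\mathcal K_\sigma$ restricts to that of $\mathcal K$, and $w$ is injective on $k$-faces. Denote labels in $\mathcal K$ by $\ell$ and in $\mathcal K_\sigma$ by $\ell_\sigma$, and let $\mathrm{MSA}(\cdot)$ denote the (unique) minimal $k$-spanning acycle. Then: (i) $|\mathrm{MSA}(\mathcal K_\sigma)\setminus\mathrm{MSA}(\mathcal K)|\le 1$ and $|\mathrm{MSA}(\mathcal K)\setminus\mathrm{MSA}(\mathcal K_\sigma)|\le 1$; equivalently $\sum_{\tau\in\mathcal K}\mathbf 1(\ell(\tau)\ne\ell_\sigma(\tau))\le 1$. (ii) If $\ell_\sigma(\sigma)=1$, then $\mathrm{MSA}(\mathcal K)=\mathrm{MSA}(\mathcal K_\sigma)$, and hence $\mathbf M^\phi(\mathcal K)=\mathbf M^\phi(\mathcal K_\sigma)$ for every strictly increasing $\phi:\mathbb{R}_+\to\mathbb{R}_+$.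
   Context: A weighted complex is a simplicial complex $\mathcal K$ with a monotone weight $w:\mathcal K\to\mathbb{R}$ (every sublevel set $\{\tau:w(\tau)\le t\}$ is a subcomplex). For a simplex $\tau$, $\mathcal K(\tau^-)=\{\rho\in\mathcal K:w(\rho)<w(\tau)\}$. Homology is over a field. A $j$-simplex $\tau$ has label $\ell(\tau)=1$ (positive) if $\partial\tau\in\partial C_j(\mathcal K(\tau^-))$ (adding $\tau$ to $\mathcal K(\tau^-)$ creates a new $j$-cycle) and $\ell(\tau)=-1$ (negative) otherwise. A set $S$ of $k$-faces is a $k$-spanning acycle if $\beta_{k-1}(\mathcal K_{k-1}\cup S)=\beta_{k-1}(\mathcal K)$ and $\beta_k(\mathcal K_{k-1}\cup S)=0$ (reduced Betti numbers, $\mathcal K_{k-1}$ the $(k-1)$-skeleton); the minimal $k$-spanning acycle $\mathrm{MSA}(\mathcal K)$ minimizes $\sum_{\tau\in S}w(\tau)$. $\mathbf M^\phi(\mathcal K)=\sum_{\tau\in\mathrm{MSA}(\mathcal K)}\phi(w(\tau))$. *)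

theory Defs
  imports Complex_Main "HOL-Library.Function_Algebras"
begin

text \<open>Simplices are finite sets of vertices (vertex type linearly ordered, giving the
  orientation).  For chains we additionally use the empty simplex as the unique
  (-1)-simplex, so that the homology computed is reduced homology (augmented complex).\<close>

definition weighted_complex :: "'a set set \<Rightarrow> ('a set \<Rightarrow> real) \<Rightarrow> bool" where
  "weighted_complex K w \<longleftrightarrow> finite K \<and>
     (\<forall>\<tau>\<in>K. finite \<tau> \<and> \<tau> \<noteq> {}) \<and>
     (\<forall>\<tau>\<in>K. \<forall>\<rho>. \<rho> \<subseteq> \<tau> \<and> \<rho> \<noteq> {} \<longrightarrow> \<rho> \<in> K) \<and>
     (\<forall>\<tau>\<in>K. \<forall>\<rho>\<in>K. \<rho> \<subseteq> \<tau> \<longrightarrow> w \<rho> \<le> w \<tau>)"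

definition faces :: "int \<Rightarrow> 'a set set \<Rightarrow> 'a set set" where
  "faces j L = {\<tau> \<in> insert {} L. int (card \<tau>) = j + 1}"

definition bd :: "'a::linorder set \<Rightarrow> ('a set \<Rightarrow> 'f::field)" where
  "bd \<tau> = (\<lambda>\<rho>. if \<rho> \<subseteq> \<tau> \<and> card \<rho> + 1 = card \<tau>
              then (- 1) ^ card {x \<in> \<tau>. x < the_elem (\<tau> - \<rho>)} else 0)"

definition scl :: "'f::field \<Rightarrow> ('a set \<Rightarrow> 'f) \<Rightarrow> ('a set \<Rightarrow> 'f)" where
  "scl c f = (\<lambda>x. c * f x)"

definition chains :: "int \<Rightarrow> 'a set set \<Rightarrow> ('a set \<Rightarrow> 'f::field) set" where
  "chains j L = {c. \<forall>\<tau>. \<tau> \<notin> faces j L \<longrightarrow> c \<tau> = 0}"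

definition bd_chain :: "int \<Rightarrow> 'a set set \<Rightarrow> ('a::linorder set \<Rightarrow> 'f::field) \<Rightarrow> ('a set \<Rightarrow> 'f)" where
  "bd_chain j L c = (\<lambda>\<rho>. \<Sum>\<tau>\<in>faces j L. c \<tau> * bd \<tau> \<rho>)"

definition betti :: "'f::field itself \<Rightarrow> int \<Rightarrow> 'a::linorder set set \<Rightarrow> int" where
  "betti F j L =
     int (vector_space.dim (scl :: 'f \<Rightarrow> _)
            {c \<in> chains j L. bd_chain j L c = (0 :: 'a set \<Rightarrow> 'f)})
   - int (vector_space.dim (scl :: 'f \<Rightarrow> _)
            (bd_chain (j + 1) L ` (chains (j + 1) L :: ('a set \<Rightarrow> 'f) set)))"

definition label :: "'f::field itself \<Rightarrow> 'a::linorder set set \<Rightarrow> ('a set \<Rightarrow> real) \<Rightarrow> 'a set \<Rightarrow> int" where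
  "label F L w \<tau> =
     (let j = int (card \<tau>) - 1; Lm = {\<rho> \<in> L. w \<rho> < w \<tau>} in
      if (bd \<tau> :: 'a set \<Rightarrow> 'f) \<in> bd_chain j Lm ` chains j Lm then 1 else -1)"

definition skeleton :: "int \<Rightarrow> 'a set set \<Rightarrow> 'a set set" where
  "skeleton j L = {\<tau> \<in> L. int (card \<tau>) \<le> j + 1}"

definition spanning_acycle :: "'f::field itself \<Rightarrow> nat \<Rightarrow> 'a::linorder set set \<Rightarrow> 'a set set \<Rightarrow> bool" where
  "spanning_acycle F k L S \<longleftrightarrow> S \<subseteq> {\<tau> \<in> L. card \<tau> = k + 1} \<and>
     betti F (int k - 1) (skeleton (int k - 1) L \<union> S) = betti F (int k - 1) L \<and>
     betti F (int k) (skeleton (int k - 1) L \<union> S) = 0"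

definition min_spanning_acycle :: "'f::field itself \<Rightarrow> nat \<Rightarrow> 'a::linorder set set \<Rightarrow> ('a set \<Rightarrow> real) \<Rightarrow> 'a set set \<Rightarrow> bool" where
  "min_spanning_acycle F k L w S \<longleftrightarrow> spanning_acycle F k L S \<and>
     (\<forall>S'. spanning_acycle F k L S' \<longrightarrow> (\<Sum>\<tau>\<in>S. w \<tau>) \<le> (\<Sum>\<tau>\<in>S'. w \<tau>))"

text \<open>The (unique, under injectivity of w on k-faces) minimal k-spanning acycle.\<close>
definition MSA :: "'f::field itself \<Rightarrow> nat \<Rightarrow> 'a::linorder set set \<Rightarrow> ('a set \<Rightarrow> real) \<Rightarrow> 'a set set" where
  "MSA F k L w = (THE S. min_spanning_acycle F k L w S)"

definition Mphi :: "'f::field itself \<Rightarrow> (real \<Rightarrow> real) \<Rightarrow> nat \<Rightarrow> 'a::linorder set set \<Rightarrow> ('a set \<Rightarrow> real) \<Rightarrow> real" where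
  "Mphi F \<phi> k L w = (\<Sum>\<tau>\<in>MSA F k L w. \<phi> (w \<tau>))"

end

theory Submission
  imports Defs
begin

text \<open>A k-spanning acycle is exactly a set S of k-faces whose boundaries are linearly independent
  (no k-cycles) and span the same space as the boundaries of all k-faces (unchanged (k-1)-homology):
  a basis of the column matroid of the k-th boundary matrix.  With injective weights the minimal
  one is the greedy basis, consisting of the k-faces whose boundary is not in the span of the
  boundaries of lighter k-faces, i.e. of the negative k-faces.

  Inserting \<sigma> can add only \<sigma> itself to the greedy basis.  A face \<tau> that drops out has the
  boundary of \<sigma> outside the span below \<tau> but inside that span enlarged by the boundary of \<tau>;
  so if two faces dropped out, the boundary of \<sigma> would lie in the span below the heavier one
  because of the lighter one, a contradiction.  If \<sigma> is positive, its boundary already lies in the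
  span of lighter faces, so no span below any threshold changes and the greedy basis is unchanged.\<close>

text \<open>Linear independence of a family rather than of a set of vectors: distinct vertices all have
  the same boundary, the empty simplex.\<close>

definition independent_family ::
    "('k::field \<Rightarrow> 'b::ab_group_add \<Rightarrow> 'b) \<Rightarrow> ('c \<Rightarrow> 'b) \<Rightarrow> 'c set \<Rightarrow> bool" where
  "independent_family scale v S \<longleftrightarrow>
     (\<forall>c. (\<Sum>\<tau>\<in>S. scale (c \<tau>) (v \<tau>)) = 0 \<longrightarrow> (\<forall>\<tau>\<in>S. c \<tau> = 0))"

definition basis_subfamily ::
    "('k::field \<Rightarrow> 'b::ab_group_add \<Rightarrow> 'b) \<Rightarrow> ('c \<Rightarrow> 'b) \<Rightarrow> 'c set \<Rightarrow> 'c set \<Rightarrow> bool" where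
  "basis_subfamily scale v E S \<longleftrightarrow> S \<subseteq> E \<and> independent_family scale v S \<and>
     module.span scale (v ` S) = module.span scale (v ` E)"

definition greedy_basis ::
    "('k::field \<Rightarrow> 'b::ab_group_add \<Rightarrow> 'b) \<Rightarrow> ('c \<Rightarrow> 'b) \<Rightarrow> 'c set \<Rightarrow> ('c \<Rightarrow> 'w::linorder) \<Rightarrow> 'c set" where
  "greedy_basis scale v E w = {\<tau> \<in> E. v \<tau> \<notin> module.span scale (v ` {\<rho> \<in> E. w \<rho> < w \<tau>})}"

context vector_space
begin

lemma span_image_iff_combination:
  assumes "finite A"
  shows "x \<in> span (v ` A) \<longleftrightarrow> (\<exists>c. x = (\<Sum>\<tau>\<in>A. c \<tau> *s v \<tau>))"
  using assms
proof (induction A arbitrary: x)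
  case (insert a A)
  have "x \<in> span (v ` insert a A) \<longleftrightarrow> (\<exists>k c. x - k *s v a = (\<Sum>\<tau>\<in>A. c \<tau> *s v \<tau>))"
    by (simp add: span_breakdown_eq insert.IH)
  also have "\<dots> \<longleftrightarrow> (\<exists>c. x = (\<Sum>\<tau>\<in>insert a A. c \<tau> *s v \<tau>))"
  proof
    assume "\<exists>k c. x - k *s v a = (\<Sum>\<tau>\<in>A. c \<tau> *s v \<tau>)"
    then obtain k c where "x - k *s v a = (\<Sum>\<tau>\<in>A. c \<tau> *s v \<tau>)" by blast
    moreover have "(\<Sum>\<tau>\<in>A. (c(a := k)) \<tau> *s v \<tau>) = (\<Sum>\<tau>\<in>A. c \<tau> *s v \<tau>)"
      using insert.hyps by (intro sum.cong) auto
    ultimately show "\<exists>c. x = (\<Sum>\<tau>\<in>insert a A. c \<tau> *s v \<tau>)"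
      using insert.hyps by (intro exI[of _ "c(a := k)"]) (simp add: algebra_simps)
  next
    assume "\<exists>c. x = (\<Sum>\<tau>\<in>insert a A. c \<tau> *s v \<tau>)"
    then obtain c where "x = (\<Sum>\<tau>\<in>insert a A. c \<tau> *s v \<tau>)" by blast
    then show "\<exists>k c. x - k *s v a = (\<Sum>\<tau>\<in>A. c \<tau> *s v \<tau>)"
      using insert.hyps by (intro exI[of _ "c a"] exI[of _ c]) simp
  qed
  finally show ?case .
qed simp

lemma combination_in_span_image:
  assumes "B \<subseteq> A"
  shows "(\<Sum>\<tau>\<in>B. c \<tau> *s v \<tau>) \<in> span (v ` A)"
  using assms by (intro span_sum span_scale span_base) auto

lemma in_span_scaleD:
  assumes "c \<noteq> 0" "c *s x \<in> span S"
  shows "x \<in> span S"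
  using span_scale[OF assms(2), of "1 / c"] assms(1) by simp

lemma independent_family_not_in_span:
  assumes "finite S" "independent_family scale v S" "\<tau> \<in> S"
  shows "v \<tau> \<notin> span (v ` (S - {\<tau>}))"
proof
  assume "v \<tau> \<in> span (v ` (S - {\<tau>}))"
  then obtain c where c: "v \<tau> = (\<Sum>\<rho>\<in>S - {\<tau>}. c \<rho> *s v \<rho>)"
    using assms(1) span_image_iff_combination[of "S - {\<tau>}"] by auto
  have "(\<Sum>\<rho>\<in>S - {\<tau>}. (c(\<tau> := -1)) \<rho> *s v \<rho>) = v \<tau>"
    unfolding c by (intro sum.cong) auto
  then have "(\<Sum>\<rho>\<in>S. (c(\<tau> := -1)) \<rho> *s v \<rho>) = 0"
    using assms(1,3) by (simp add: sum.remove)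
  then show False
    using assms(2,3) unfolding independent_family_def by (metis fun_upd_same neg_equal_0_iff_equal one_neq_zero)
qed

lemma independent_family_greedy_basis:
  assumes "finite E" "inj_on w E"
  shows "independent_family scale v (greedy_basis scale v E w)"
  unfolding independent_family_def
proof (intro allI impI ballI, rule ccontr)
  let ?G = "greedy_basis scale v E w"
  fix c \<tau> assume sum0: "(\<Sum>\<tau>\<in>?G. c \<tau> *s v \<tau>) = 0" and "\<tau> \<in> ?G" "c \<tau> \<noteq> 0"
  define N where "N = {\<tau> \<in> ?G. c \<tau> \<noteq> 0}"
  have "finite N" "N \<noteq> {}"
    using assms(1) \<open>\<tau> \<in> ?G\<close> \<open>c \<tau> \<noteq> 0\<close> by (auto simp: N_def greedy_basis_def)
  then have "Max (w ` N) \<in> w ` N"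
    by simp
  then obtain \<tau>0 where "\<tau>0 \<in> N" "w \<tau>0 = Max (w ` N)"
    by (metis imageE)
  with \<open>finite N\<close> have max: "\<forall>\<rho>\<in>N. w \<rho> \<le> w \<tau>0"
    by simp
  have "N \<subseteq> E"
    by (auto simp: N_def greedy_basis_def)
  have lower: "N - {\<tau>0} \<subseteq> {\<rho> \<in> E. w \<rho> < w \<tau>0}"
  proof
    fix \<rho> assume "\<rho> \<in> N - {\<tau>0}"
    with \<open>N \<subseteq> E\<close> \<open>\<tau>0 \<in> N\<close> assms(2) have "\<rho> \<in> E" "w \<rho> \<noteq> w \<tau>0"
      by (auto dest: inj_onD)
    with max \<open>\<rho> \<in> N - {\<tau>0}\<close> show "\<rho> \<in> {\<rho> \<in> E. w \<rho> < w \<tau>0}"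
      by force
  qed
  have "(\<Sum>\<tau>\<in>?G. c \<tau> *s v \<tau>) = (\<Sum>\<tau>\<in>N. c \<tau> *s v \<tau>)"
    using assms(1) by (intro sum.mono_neutral_right) (auto simp: N_def greedy_basis_def)
  also have "\<dots> = c \<tau>0 *s v \<tau>0 + (\<Sum>\<tau>\<in>N - {\<tau>0}. c \<tau> *s v \<tau>)"
    using \<open>finite N\<close> \<open>\<tau>0 \<in> N\<close> by (simp add: sum.remove)
  finally have "c \<tau>0 *s v \<tau>0 = - (\<Sum>\<tau>\<in>N - {\<tau>0}. c \<tau> *s v \<tau>)"
    using sum0 by (simp add: eq_neg_iff_add_eq_0)
  also have "\<dots> \<in> span (v ` {\<rho> \<in> E. w \<rho> < w \<tau>0})"
    using lower by (intro span_neg combination_in_span_image)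
  finally have "c \<tau>0 *s v \<tau>0 \<in> span (v ` {\<rho> \<in> E. w \<rho> < w \<tau>0})" .
  moreover have "c \<tau>0 \<noteq> 0"
    using \<open>\<tau>0 \<in> N\<close> by (simp add: N_def)
  ultimately have "v \<tau>0 \<in> span (v ` {\<rho> \<in> E. w \<rho> < w \<tau>0})"
    by (rule in_span_scaleD[rotated])
  then show False
    using \<open>\<tau>0 \<in> N\<close> by (simp add: N_def greedy_basis_def)
qed

lemma in_span_greedy_basis_le:
  assumes "finite E" "\<tau> \<in> E"
  shows "v \<tau> \<in> span (v ` {g \<in> greedy_basis scale v E w. w g \<le> w \<tau>})"
  using assms(2)
proof (induction "card {\<rho> \<in> E. w \<rho> < w \<tau>}" arbitrary: \<tau> rule: less_induct)
  case less
  let ?G = "greedy_basis scale v E w"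
  show ?case
  proof (cases "\<tau> \<in> ?G")
    case False
    have "v ` {\<rho> \<in> E. w \<rho> < w \<tau>} \<subseteq> span (v ` {g \<in> ?G. w g \<le> w \<tau>})"
    proof clarify
      fix \<rho> assume "\<rho> \<in> E" "w \<rho> < w \<tau>"
      then have "card {x \<in> E. w x < w \<rho>} < card {x \<in> E. w x < w \<tau>}"
        using assms(1) by (intro psubset_card_mono) auto
      then have "v \<rho> \<in> span (v ` {g \<in> ?G. w g \<le> w \<rho>})"
        using less.hyps \<open>\<rho> \<in> E\<close> by blast
      also have "\<dots> \<subseteq> span (v ` {g \<in> ?G. w g \<le> w \<tau>})"
        using \<open>w \<rho> < w \<tau>\<close> by (intro span_mono) auto
      finally show "v \<rho> \<in> span (v ` {g \<in> ?G. w g \<le> w \<tau>})" .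
    qed
    then have "span (v ` {\<rho> \<in> E. w \<rho> < w \<tau>}) \<subseteq> span (v ` {g \<in> ?G. w g \<le> w \<tau>})"
      by (simp add: span_minimal)
    then show ?thesis
      using False less.prems by (auto simp: greedy_basis_def)
  qed (auto intro: span_base)
qed

lemma span_below_subset_span_greedy_basis:
  assumes "finite E"
  shows "span (v ` {\<rho> \<in> E. w \<rho> < t}) \<subseteq> span (v ` {g \<in> greedy_basis scale v E w. w g < t})"
proof (intro span_minimal subspace_span, clarify)
  fix \<rho> assume "\<rho> \<in> E" "w \<rho> < t"
  have "v \<rho> \<in> span (v ` {g \<in> greedy_basis scale v E w. w g \<le> w \<rho>})"
    using assms \<open>\<rho> \<in> E\<close> by (rule in_span_greedy_basis_le)
  also have "\<dots> \<subseteq> span (v ` {g \<in> greedy_basis scale v E w. w g < t})"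
    using \<open>w \<rho> < t\<close> by (intro span_mono) auto
  finally show "v \<rho> \<in> span (v ` {g \<in> greedy_basis scale v E w. w g < t})" .
qed

lemma basis_subfamily_greedy_basis:
  assumes "finite E" "inj_on w E"
  shows "basis_subfamily scale v E (greedy_basis scale v E w)"
proof -
  let ?G = "greedy_basis scale v E w"
  have "?G \<subseteq> E"
    by (auto simp: greedy_basis_def)
  have "v ` E \<subseteq> span (v ` ?G)"
  proof clarify
    fix \<tau> assume "\<tau> \<in> E"
    with assms(1) have "v \<tau> \<in> span (v ` {g \<in> ?G. w g \<le> w \<tau>})"
      by (rule in_span_greedy_basis_le)
    also have "\<dots> \<subseteq> span (v ` ?G)"
      by (intro span_mono) auto
    finally show "v \<tau> \<in> span (v ` ?G)" .
  qed
  then have "span (v ` E) \<subseteq> span (v ` ?G)"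
    by (rule span_minimal) simp
  moreover have "span (v ` ?G) \<subseteq> span (v ` E)"
    using \<open>?G \<subseteq> E\<close> by (intro span_mono image_mono)
  ultimately show ?thesis
    using \<open>?G \<subseteq> E\<close> independent_family_greedy_basis[OF assms]
    by (simp add: basis_subfamily_def)
qed

lemma independent_family_subset:
  assumes "independent_family scale v S" "T \<subseteq> S" "finite S"
  shows "independent_family scale v T"
  unfolding independent_family_def
proof (intro allI impI ballI)
  fix c \<tau> assume "(\<Sum>\<tau>\<in>T. c \<tau> *s v \<tau>) = 0" "\<tau> \<in> T"
  define d where "d \<rho> = (if \<rho> \<in> T then c \<rho> else 0)" for \<rho>
  have "(\<Sum>\<rho>\<in>S. d \<rho> *s v \<rho>) = (\<Sum>\<rho>\<in>T. c \<rho> *s v \<rho>)"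
    using assms(2,3) by (intro sum.mono_neutral_cong_right) (auto simp: d_def)
  with \<open>(\<Sum>\<tau>\<in>T. c \<tau> *s v \<tau>) = 0\<close> have "d \<tau> = 0"
    using assms(1,2) \<open>\<tau> \<in> T\<close> unfolding independent_family_def by (metis subsetD)
  with \<open>\<tau> \<in> T\<close> show "c \<tau> = 0"
    by (simp add: d_def)
qed

lemma independent_family_insert:
  assumes "finite T" "\<tau> \<notin> T" "independent_family scale v T" "v \<tau> \<notin> span (v ` T)"
  shows "independent_family scale v (insert \<tau> T)"
  unfolding independent_family_def
proof (intro allI impI)
  fix c assume "(\<Sum>\<rho>\<in>insert \<tau> T. c \<rho> *s v \<rho>) = 0"
  then have sum0: "c \<tau> *s v \<tau> = - (\<Sum>\<rho>\<in>T. c \<rho> *s v \<rho>)"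
    using assms(1,2) by (simp add: eq_neg_iff_add_eq_0)
  have "c \<tau> *s v \<tau> \<in> span (v ` T)"
    unfolding sum0 by (intro span_neg combination_in_span_image) simp
  have "c \<tau> = 0"
  proof (rule ccontr)
    assume "c \<tau> \<noteq> 0"
    then have "v \<tau> \<in> span (v ` T)"
      using \<open>c \<tau> *s v \<tau> \<in> span (v ` T)\<close> by (rule in_span_scaleD)
    with assms(4) show False
      by contradiction
  qed
  with sum0 have "\<forall>\<rho>\<in>T. c \<rho> = 0"
    using assms(3) unfolding independent_family_def by simp
  with \<open>c \<tau> = 0\<close> show "\<forall>\<rho>\<in>insert \<tau> T. c \<rho> = 0"
    by simp
qed

lemma basis_subfamily_exchange:
  assumes "finite E" "basis_subfamily scale v E S" "\<tau> \<in> E" "\<tau> \<notin> S"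
    and "v \<tau> = (\<Sum>x\<in>S. c x *s v x)" "\<rho> \<in> S" "c \<rho> \<noteq> 0"
  shows "basis_subfamily scale v E (insert \<tau> (S - {\<rho>}))"
proof -
  have "S \<subseteq> E" and indep: "independent_family scale v S" and span_S: "span (v ` S) = span (v ` E)"
    using assms(2) by (auto simp: basis_subfamily_def)
  have "finite S"
    using \<open>S \<subseteq> E\<close> assms(1) by (rule finite_subset)
  have v\<tau>: "v \<tau> = c \<rho> *s v \<rho> + (\<Sum>x\<in>S - {\<rho>}. c x *s v x)"
    using assms(5,6) \<open>finite S\<close> by (simp add: sum.remove)
  then have v\<rho>: "v \<rho> = (1 / c \<rho>) *s (v \<tau> - (\<Sum>x\<in>S - {\<rho>}. c x *s v x))"
    using assms(7) by simp
  have "v \<rho> \<in> span (v ` insert \<tau> (S - {\<rho>}))"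
    unfolding v\<rho> by (intro span_scale span_diff span_base combination_in_span_image) auto
  then have "v ` S \<subseteq> span (v ` insert \<tau> (S - {\<rho>}))"
    by (auto intro: span_base)
  then have "span (v ` E) \<subseteq> span (v ` insert \<tau> (S - {\<rho>}))"
    unfolding span_S[symmetric] by (rule span_minimal) simp
  moreover have "span (v ` insert \<tau> (S - {\<rho>})) \<subseteq> span (v ` E)"
    using \<open>S \<subseteq> E\<close> assms(3) by (intro span_mono) auto
  moreover have "v \<tau> \<notin> span (v ` (S - {\<rho>}))"
  proof
    assume "v \<tau> \<in> span (v ` (S - {\<rho>}))"
    then have "v \<rho> \<in> span (v ` (S - {\<rho>}))"
      unfolding v\<rho> by (intro span_scale span_diff combination_in_span_image) auto
    then show False
      using independent_family_not_in_span[OF \<open>finite S\<close> indep assms(6)] by contradiction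
  qed
  then have "independent_family scale v (insert \<tau> (S - {\<rho>}))"
    using \<open>finite S\<close> assms(4) independent_family_subset[OF indep]
    by (intro independent_family_insert) auto
  ultimately show ?thesis
    using \<open>S \<subseteq> E\<close> assms(3) by (auto simp: basis_subfamily_def)
qed

lemma in_greedy_basisI:
  assumes "finite E" "S \<subseteq> E" "independent_family scale v S" "\<tau> \<in> S"
    and "{g \<in> greedy_basis scale v E w. w g < w \<tau>} \<subseteq> S"
  shows "\<tau> \<in> greedy_basis scale v E w"
proof (rule ccontr)
  assume "\<tau> \<notin> greedy_basis scale v E w"
  then have "v \<tau> \<in> span (v ` {\<rho> \<in> E. w \<rho> < w \<tau>})"
    using assms(2,4) by (auto simp: greedy_basis_def)
  also have "\<dots> \<subseteq> span (v ` {g \<in> greedy_basis scale v E w. w g < w \<tau>})"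
    using assms(1) by (rule span_below_subset_span_greedy_basis)
  also have "\<dots> \<subseteq> span (v ` (S - {\<tau>}))"
    using assms(5) by (intro span_mono image_mono) auto
  finally show False
    using independent_family_not_in_span[OF finite_subset[OF assms(2,1)] assms(3,4)] by contradiction
qed

lemma greedy_basis_exchange:
  assumes "finite E" "inj_on w E" "basis_subfamily scale v E S"
    and "\<tau> \<in> greedy_basis scale v E w" "\<tau> \<notin> S"
  obtains \<rho> where "\<rho> \<in> S" "\<rho> \<notin> greedy_basis scale v E w"
    "basis_subfamily scale v E (insert \<tau> (S - {\<rho>}))"
proof -
  let ?G = "greedy_basis scale v E w"
  have "S \<subseteq> E" "span (v ` S) = span (v ` E)"
    using assms(3) by (auto simp: basis_subfamily_def)
  have "?G \<subseteq> E" "\<tau> \<in> E"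
    using assms(4) by (auto simp: greedy_basis_def)
  have "finite S" "finite ?G"
    using \<open>S \<subseteq> E\<close> \<open>?G \<subseteq> E\<close> assms(1) by (auto intro: finite_subset)
  have "v \<tau> \<in> span (v ` S)"
    using \<open>\<tau> \<in> E\<close> \<open>span (v ` S) = span (v ` E)\<close> by (auto intro: span_base)
  then obtain c where c: "v \<tau> = (\<Sum>x\<in>S. c x *s v x)"
    using span_image_iff_combination[OF \<open>finite S\<close>] by blast
  have "\<exists>\<rho>\<in>S - ?G. c \<rho> \<noteq> 0"
  proof (rule ccontr)
    assume "\<not> (\<exists>\<rho>\<in>S - ?G. c \<rho> \<noteq> 0)"
    then have "v \<tau> = (\<Sum>x\<in>S \<inter> ?G. c x *s v x)"
      unfolding c using \<open>finite S\<close> by (intro sum.mono_neutral_right) auto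
    also have "\<dots> \<in> span (v ` (?G - {\<tau>}))"
      using assms(5) by (intro combination_in_span_image) auto
    finally show False
      using independent_family_not_in_span[OF \<open>finite ?G\<close> independent_family_greedy_basis[OF assms(1,2)] assms(4)]
      by contradiction
  qed
  then obtain \<rho> where "\<rho> \<in> S" "\<rho> \<notin> ?G" "c \<rho> \<noteq> 0"
    by blast
  moreover have "basis_subfamily scale v E (insert \<tau> (S - {\<rho>}))"
    using assms(1,3) \<open>\<tau> \<in> E\<close> assms(5) c \<open>\<rho> \<in> S\<close> \<open>c \<rho> \<noteq> 0\<close> by (rule basis_subfamily_exchange)
  ultimately show thesis
    using that by simp
qed

lemma min_weight_basis_subfamily_eq_greedy_basis:
  fixes w :: "'c \<Rightarrow> 'w::linordered_ab_group_add"
  assumes "finite E" "inj_on w E" "basis_subfamily scale v E S"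
    and min: "\<And>S'. basis_subfamily scale v E S' \<Longrightarrow> sum w S \<le> sum w S'"
  shows "S = greedy_basis scale v E w"
proof (rule ccontr)
  let ?G = "greedy_basis scale v E w"
  assume "S \<noteq> ?G"
  define D where "D = (S - ?G) \<union> (?G - S)"
  have "S \<subseteq> E" "?G \<subseteq> E"
    using assms(3) by (auto simp: basis_subfamily_def greedy_basis_def)
  then have "finite S" "D \<subseteq> E" "finite D"
    using assms(1) by (auto simp: D_def intro: finite_subset)
  moreover have "D \<noteq> {}"
    using \<open>S \<noteq> ?G\<close> by (auto simp: D_def)
  ultimately obtain \<tau> where "\<tau> \<in> D" and "\<forall>\<rho>\<in>D. w \<tau> \<le> w \<rho>"
    using ex_is_arg_min_if_finite[of D w] by (auto simp: is_arg_min_def not_less)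
  have lightest: "w \<tau> < w \<rho>" if "\<rho> \<in> D" "\<rho> \<noteq> \<tau>" for \<rho>
  proof -
    have "w \<rho> \<noteq> w \<tau>"
      using that \<open>\<tau> \<in> D\<close> \<open>D \<subseteq> E\<close> assms(2) by (auto dest: inj_onD)
    moreover have "w \<tau> \<le> w \<rho>"
      using \<open>\<forall>\<rho>\<in>D. w \<tau> \<le> w \<rho>\<close> that(1) by blast
    ultimately show ?thesis
      by simp
  qed
  show False
  proof (cases "\<tau> \<in> S")
    case True
    have "{g \<in> ?G. w g < w \<tau>} \<subseteq> S"
    proof clarify
      fix g assume "g \<in> ?G" "w g < w \<tau>"
      show "g \<in> S"
      proof (rule ccontr)
        assume "g \<notin> S"
        with \<open>g \<in> ?G\<close> have "g \<in> D"
          by (simp add: D_def)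
        with lightest[of g] \<open>w g < w \<tau>\<close> show False
          by fastforce
      qed
    qed
    with assms(1) \<open>S \<subseteq> E\<close> have "\<tau> \<in> ?G"
      using assms(3) True by (intro in_greedy_basisI) (auto simp: basis_subfamily_def)
    with True \<open>\<tau> \<in> D\<close> show False
      by (simp add: D_def)
  next
    case False
    with \<open>\<tau> \<in> D\<close> have "\<tau> \<in> ?G"
      by (simp add: D_def)
    then obtain \<rho> where "\<rho> \<in> S" "\<rho> \<notin> ?G" and basis: "basis_subfamily scale v E (insert \<tau> (S - {\<rho>}))"
      using False by (rule greedy_basis_exchange[OF assms(1-3)])
    then have "w \<tau> < w \<rho>"
      using lightest False by (auto simp: D_def)
    have "sum w (insert \<tau> (S - {\<rho>})) = sum w S - w \<rho> + w \<tau>"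
      using \<open>finite S\<close> \<open>\<rho> \<in> S\<close> False by (simp add: sum_diff1)
    with min[OF basis] \<open>w \<tau> < w \<rho>\<close> show False
      by simp
  qed
qed

lemma min_weight_basis_subfamily_iff_greedy_basis:
  fixes w :: "'c \<Rightarrow> 'w::linordered_ab_group_add"
  assumes "finite E" "inj_on w E"
  shows "basis_subfamily scale v E S \<and> (\<forall>S'. basis_subfamily scale v E S' \<longrightarrow> sum w S \<le> sum w S')
    \<longleftrightarrow> S = greedy_basis scale v E w"
proof -
  let ?B = "{S. basis_subfamily scale v E S}"
  have "?B \<subseteq> Pow E"
    by (auto simp: basis_subfamily_def)
  then have "finite ?B"
    using assms(1) by (simp add: finite_subset)
  moreover have "greedy_basis scale v E w \<in> ?B"
    using basis_subfamily_greedy_basis[OF assms] by simp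
  ultimately obtain S0 where "S0 \<in> ?B" and S0_min: "\<forall>S'\<in>?B. sum w S0 \<le> sum w S'"
    using ex_is_arg_min_if_finite[of ?B "sum w"] by (auto simp: is_arg_min_def not_less)
  then have "S0 = greedy_basis scale v E w"
    using assms by (intro min_weight_basis_subfamily_eq_greedy_basis) auto
  show ?thesis
  proof
    assume "basis_subfamily scale v E S \<and> (\<forall>S'. basis_subfamily scale v E S' \<longrightarrow> sum w S \<le> sum w S')"
    then show "S = greedy_basis scale v E w"
      by (intro min_weight_basis_subfamily_eq_greedy_basis[OF assms]) simp_all
  next
    assume "S = greedy_basis scale v E w"
    with \<open>S0 \<in> ?B\<close> S0_min \<open>S0 = greedy_basis scale v E w\<close>
    show "basis_subfamily scale v E S \<and> (\<forall>S'. basis_subfamily scale v E S' \<longrightarrow> sum w S \<le> sum w S')"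
      by simp
  qed
qed

lemma greedy_basis_insert_diff_subset:
  "greedy_basis scale v (insert \<sigma> E) w - greedy_basis scale v E w \<subseteq> {\<sigma>}"
proof
  fix \<tau> assume \<tau>: "\<tau> \<in> greedy_basis scale v (insert \<sigma> E) w - greedy_basis scale v E w"
  show "\<tau> \<in> {\<sigma>}"
  proof (rule ccontr)
    assume "\<tau> \<notin> {\<sigma>}"
    with \<tau> have "\<tau> \<in> E"
      by (simp add: greedy_basis_def)
    have "span (v ` {\<rho> \<in> E. w \<rho> < w \<tau>}) \<subseteq> span (v ` {\<rho> \<in> insert \<sigma> E. w \<rho> < w \<tau>})"
      by (intro span_mono) auto
    with \<tau> \<open>\<tau> \<in> E\<close> show False
      by (auto simp: greedy_basis_def)
  qed
qed

lemma greedy_basis_insert_removedD: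
  assumes "\<tau> \<in> greedy_basis scale v E w" "\<tau> \<notin> greedy_basis scale v (insert \<sigma> E) w"
  shows "v \<sigma> \<notin> span (v ` {\<rho> \<in> E. w \<rho> < w \<tau>})"
    and "v \<sigma> \<in> span (v ` insert \<tau> {\<rho> \<in> E. w \<rho> < w \<tau>})"
proof -
  have "\<tau> \<in> E" and not_below: "v \<tau> \<notin> span (v ` {\<rho> \<in> E. w \<rho> < w \<tau>})"
    using assms(1) by (auto simp: greedy_basis_def)
  have "v \<tau> \<in> span (v ` {\<rho> \<in> insert \<sigma> E. w \<rho> < w \<tau>})"
    using assms(2) \<open>\<tau> \<in> E\<close> by (auto simp: greedy_basis_def)
  also have "\<dots> \<subseteq> span (insert (v \<sigma>) (v ` {\<rho> \<in> E. w \<rho> < w \<tau>}))"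
    by (intro span_mono) auto
  finally have with_\<sigma>: "v \<tau> \<in> span (insert (v \<sigma>) (v ` {\<rho> \<in> E. w \<rho> < w \<tau>}))" .
  show "v \<sigma> \<notin> span (v ` {\<rho> \<in> E. w \<rho> < w \<tau>})"
    using span_trans[OF _ with_\<sigma>] not_below by blast
  have "v \<sigma> \<in> span (insert (v \<tau>) (v ` {\<rho> \<in> E. w \<rho> < w \<tau>}))"
    using with_\<sigma> not_below by (rule in_span_insert)
  then show "v \<sigma> \<in> span (v ` insert \<tau> {\<rho> \<in> E. w \<rho> < w \<tau>})"
    by simp
qed

lemma card_greedy_basis_diff_insert_le_1:
  assumes "finite E" "inj_on w (insert \<sigma> E)"
  shows "card (greedy_basis scale v E w - greedy_basis scale v (insert \<sigma> E) w) \<le> 1"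
proof -
  let ?D = "greedy_basis scale v E w - greedy_basis scale v (insert \<sigma> E) w"
  have not_lighter: "\<not> w \<tau>1 < w \<tau>2" if "\<tau>1 \<in> ?D" "\<tau>2 \<in> ?D" for \<tau>1 \<tau>2
  proof
    assume "w \<tau>1 < w \<tau>2"
    have "\<tau>1 \<in> E"
      using that(1) by (simp add: greedy_basis_def)
    have "v \<sigma> \<in> span (v ` insert \<tau>1 {\<rho> \<in> E. w \<rho> < w \<tau>1})"
      using that(1) by (intro greedy_basis_insert_removedD(2)) auto
    also have "\<dots> \<subseteq> span (v ` {\<rho> \<in> E. w \<rho> < w \<tau>2})"
      using \<open>\<tau>1 \<in> E\<close> \<open>w \<tau>1 < w \<tau>2\<close> by (intro span_mono) auto
    finally show False
      using greedy_basis_insert_removedD(1)[of \<tau>2] that(2) by blast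
  qed
  have "\<tau>1 = \<tau>2" if "\<tau>1 \<in> ?D" "\<tau>2 \<in> ?D" for \<tau>1 \<tau>2
  proof -
    have "w \<tau>1 = w \<tau>2"
      using not_lighter that by (meson linorder_neqE)
    moreover have "\<tau>1 \<in> insert \<sigma> E" "\<tau>2 \<in> insert \<sigma> E"
      using that by (auto simp: greedy_basis_def)
    ultimately show ?thesis
      by (rule inj_onD[OF assms(2)])
  qed
  moreover have "finite ?D"
    using assms(1) by (auto simp: greedy_basis_def)
  ultimately show ?thesis
    using card_le_Suc0_iff_eq by (metis One_nat_def)
qed

lemma greedy_basis_insert_eq:
  assumes "\<sigma> \<notin> greedy_basis scale v (insert \<sigma> E) w"
  shows "greedy_basis scale v (insert \<sigma> E) w = greedy_basis scale v E w"
proof -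
  have "{\<rho> \<in> insert \<sigma> E. w \<rho> < w \<sigma>} = {\<rho> \<in> E. w \<rho> < w \<sigma>}"
    by auto
  with assms have \<sigma>_below: "v \<sigma> \<in> span (v ` {\<rho> \<in> E. w \<rho> < w \<sigma>})"
    by (simp add: greedy_basis_def)
  have "span (v ` {\<rho> \<in> insert \<sigma> E. w \<rho> < t}) = span (v ` {\<rho> \<in> E. w \<rho> < t})" for t
  proof
    have "v \<sigma> \<in> span (v ` {\<rho> \<in> E. w \<rho> < t})" if "w \<sigma> < t"
    proof -
      have "span (v ` {\<rho> \<in> E. w \<rho> < w \<sigma>}) \<subseteq> span (v ` {\<rho> \<in> E. w \<rho> < t})"
        using that by (intro span_mono) auto
      with \<sigma>_below show ?thesis
        by blast
    qed
    then have "v ` {\<rho> \<in> insert \<sigma> E. w \<rho> < t} \<subseteq> span (v ` {\<rho> \<in> E. w \<rho> < t})"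
      by (auto intro: span_base)
    then show "span (v ` {\<rho> \<in> insert \<sigma> E. w \<rho> < t}) \<subseteq> span (v ` {\<rho> \<in> E. w \<rho> < t})"
      by (rule span_minimal) simp
    show "span (v ` {\<rho> \<in> E. w \<rho> < t}) \<subseteq> span (v ` {\<rho> \<in> insert \<sigma> E. w \<rho> < t})"
      by (intro span_mono) auto
  qed
  then show ?thesis
    using assms \<sigma>_below by (auto simp: greedy_basis_def)
qed

lemma dim_eq_iff_span_eq:
  assumes "finite T" "S \<subseteq> T"
  shows "dim S = dim T \<longleftrightarrow> span S = span T"
proof
  assume dim_eq: "dim S = dim T"
  show "span S = span T"
  proof (rule ccontr)
    assume "span S \<noteq> span T"
    obtain B where B: "B \<subseteq> S" "independent B" "S \<subseteq> span B" "card B = dim S"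
      by (rule basis_exists)
    obtain C where C: "C \<subseteq> T" "independent C" "T \<subseteq> span C" "card C = dim T"
      by (rule basis_exists)
    have "span B = span S"
      using B(1,3) by (simp add: span_eq span_superset subset_trans[OF B(1) span_superset])
    moreover have "\<not> T \<subseteq> span S"
      using \<open>span S \<noteq> span T\<close> span_mono[OF assms(2)] span_minimal[of T "span S"] by auto
    ultimately obtain x where "x \<in> T" "x \<notin> span B"
      by auto
    then have "independent (insert x B)" "x \<notin> B"
      using B(2) independent_insertI span_base by auto
    moreover have "insert x B \<subseteq> span C"
      using \<open>x \<in> T\<close> C(3) B(1) assms(2) by blast
    moreover have "finite C"
      using C(1) assms(1) by (rule finite_subset)
    ultimately have "card (insert x B) \<le> card C" "finite B"
      using independent_span_bound[of C "insert x B"] by auto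
    with \<open>x \<notin> B\<close> B(4) C(4) dim_eq show False
      by simp
  qed
qed (rule span_eq_dim)

lemma dim_eq_0_iff:
  assumes "finite W" "X \<subseteq> span W"
  shows "dim X = 0 \<longleftrightarrow> X \<subseteq> {0}"
proof
  assume "dim X = 0"
  obtain B where B: "B \<subseteq> X" "independent B" "X \<subseteq> span B" "card B = dim X"
    by (rule basis_exists)
  have "finite B"
    using B(1,2) assms independent_span_bound by blast
  with B(4) \<open>dim X = 0\<close> have "B = {}"
    by simp
  with B(3) show "X \<subseteq> {0}"
    by simp
qed (use dim_le_card[of X "{}"] in simp)

end

interpretation chain_space: vector_space "scl :: 'f::field \<Rightarrow> ('b set \<Rightarrow> 'f) \<Rightarrow> 'b set \<Rightarrow> 'f"
  by unfold_locales (auto simp: scl_def fun_eq_iff algebra_simps)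

lemma sum_fun_apply: "sum f A x = (\<Sum>a\<in>A. f a x)"
  by (induction A rule: infinite_finite_induct) auto

lemma bd_chain_eq_sum: "bd_chain j L c = (\<Sum>\<tau>\<in>faces j L. scl (c \<tau>) (bd \<tau>))"
  by (simp add: bd_chain_def sum_fun_apply scl_def fun_eq_iff)

lemma finite_faces: "finite L \<Longrightarrow> finite (faces j L)"
  by (simp add: faces_def)

lemma faces_nat: "faces (int k) L = {\<tau> \<in> L. card \<tau> = k + 1}"
  by (auto simp: faces_def)

lemma chains_cong: "faces j L = faces j L' \<Longrightarrow> chains j L = chains j L'"
  by (simp add: chains_def)

lemma bd_chain_cong: "faces j L = faces j L' \<Longrightarrow> bd_chain j L = bd_chain j L'"
  by (simp add: bd_chain_def fun_eq_iff)

lemma image_bd_chain: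
  fixes L :: "'a::linorder set set"
  assumes "finite L"
  shows "(bd_chain j L ` chains j L :: ('a set \<Rightarrow> 'f::field) set) = chain_space.span (bd ` faces j L)"
proof
  show "(bd_chain j L ` chains j L :: ('a set \<Rightarrow> 'f) set) \<subseteq> chain_space.span (bd ` faces j L)"
    by (auto simp: bd_chain_eq_sum intro!: chain_space.combination_in_span_image)
  show "chain_space.span (bd ` faces j L) \<subseteq> (bd_chain j L ` chains j L :: ('a set \<Rightarrow> 'f) set)"
  proof
    fix x :: "'a set \<Rightarrow> 'f" assume "x \<in> chain_space.span (bd ` faces j L)"
    then obtain c where c: "x = (\<Sum>\<tau>\<in>faces j L. scl (c \<tau>) (bd \<tau>))"
      using chain_space.span_image_iff_combination[OF finite_faces[OF assms]] by blast
    define c' where "c' \<tau> = (if \<tau> \<in> faces j L then c \<tau> else 0)" for \<tau>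
    have "c' \<in> chains j L"
      by (simp add: chains_def c'_def)
    moreover have "bd_chain j L c' = x"
      unfolding c bd_chain_eq_sum by (rule sum.cong) (auto simp: c'_def)
    ultimately show "x \<in> bd_chain j L ` chains j L"
      by blast
  qed
qed

lemma chains_subset_span_indicators:
  assumes "finite L"
  shows "(chains j L :: ('a set \<Rightarrow> 'f::field) set)
    \<subseteq> chain_space.span ((\<lambda>\<tau> \<rho>. if \<rho> = \<tau> then 1 else 0) ` faces j L)"
proof
  fix c :: "'a set \<Rightarrow> 'f" assume c: "c \<in> chains j L"
  have "c = (\<Sum>\<tau>\<in>faces j L. scl (c \<tau>) (\<lambda>\<rho>. if \<rho> = \<tau> then 1 else 0))"
  proof
    fix \<rho>
    have "(\<Sum>\<tau>\<in>faces j L. scl (c \<tau>) (\<lambda>\<rho>. if \<rho> = \<tau> then 1 else 0)) \<rho>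
        = (\<Sum>\<tau>\<in>faces j L. if \<rho> = \<tau> then c \<rho> else 0)"
      unfolding sum_fun_apply by (rule sum.cong) (auto simp: scl_def)
    also have "\<dots> = c \<rho>"
      using c finite_faces[OF assms] by (auto simp: chains_def)
    finally show "c \<rho> = (\<Sum>\<tau>\<in>faces j L. scl (c \<tau>) (\<lambda>\<rho>. if \<rho> = \<tau> then 1 else 0)) \<rho>"
      by simp
  qed
  then show "c \<in> chain_space.span ((\<lambda>\<tau> \<rho>. if \<rho> = \<tau> then 1 else 0) ` faces j L)"
    using chain_space.span_image_iff_combination[OF finite_faces[OF assms]] by blast
qed

lemma cycles_trivial_iff_independent_family:
  fixes L :: "'a::linorder set set"
  shows "{c \<in> chains j L. bd_chain j L c = (0 :: 'a set \<Rightarrow> 'f::field)} \<subseteq> {0}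
    \<longleftrightarrow> independent_family scl (bd :: 'a set \<Rightarrow> 'a set \<Rightarrow> 'f) (faces j L)"
  unfolding independent_family_def
proof (intro iffI allI impI ballI)
  fix d :: "'a set \<Rightarrow> 'f" and \<tau>
  assume trivial: "{c \<in> chains j L. bd_chain j L c = (0 :: 'a set \<Rightarrow> 'f)} \<subseteq> {0}"
    and "(\<Sum>\<tau>\<in>faces j L. scl (d \<tau>) (bd \<tau>)) = (0 :: 'a set \<Rightarrow> 'f)" "\<tau> \<in> faces j L"
  define c where "c \<rho> = (if \<rho> \<in> faces j L then d \<rho> else 0)" for \<rho>
  have "bd_chain j L c = (\<Sum>\<tau>\<in>faces j L. scl (d \<tau>) (bd \<tau>))"
    unfolding bd_chain_eq_sum by (rule sum.cong) (auto simp: c_def)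
  with \<open>(\<Sum>\<tau>\<in>faces j L. scl (d \<tau>) (bd \<tau>)) = 0\<close> have "c \<in> {c \<in> chains j L. bd_chain j L c = 0}"
    by (simp add: chains_def c_def)
  with trivial have "c = 0"
    by blast
  with \<open>\<tau> \<in> faces j L\<close> show "d \<tau> = 0"
    by (metis c_def zero_fun_apply)
next
  assume indep: "\<forall>c. (\<Sum>\<tau>\<in>faces j L. scl (c \<tau>) (bd \<tau> :: 'a set \<Rightarrow> 'f)) = 0 \<longrightarrow> (\<forall>\<tau>\<in>faces j L. c \<tau> = 0)"
  show "{c \<in> chains j L. bd_chain j L c = (0 :: 'a set \<Rightarrow> 'f)} \<subseteq> {0}"
  proof clarify
    fix c :: "'a set \<Rightarrow> 'f" assume "c \<in> chains j L" "bd_chain j L c = 0"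
    with indep have "\<forall>\<tau>\<in>faces j L. c \<tau> = 0"
      by (simp add: bd_chain_eq_sum)
    with \<open>c \<in> chains j L\<close> show "c = 0"
      by (auto simp: chains_def fun_eq_iff)
  qed
qed

lemma betti_eq_iff_span_boundaries_eq:
  fixes L L' :: "'a::linorder set set" and F :: "'f::field itself"
  assumes "finite L" "finite L'" "faces (j - 1) L' = faces (j - 1) L" "faces j L' \<subseteq> faces j L"
  shows "betti F (j - 1) L' = betti F (j - 1) L
    \<longleftrightarrow> chain_space.span (bd ` faces j L' :: ('a set \<Rightarrow> 'f) set) = chain_space.span (bd ` faces j L)"
proof -
  have "betti F (j - 1) L' = betti F (j - 1) L
      \<longleftrightarrow> chain_space.dim (bd ` faces j L' :: ('a set \<Rightarrow> 'f) set)
        = chain_space.dim (bd ` faces j L :: ('a set \<Rightarrow> 'f) set)"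
    unfolding betti_def diff_add_cancel chains_cong[OF assms(3)] bd_chain_cong[OF assms(3)]
      image_bd_chain[OF assms(1)] image_bd_chain[OF assms(2)]
    by simp
  also have "\<dots> \<longleftrightarrow> chain_space.span (bd ` faces j L' :: ('a set \<Rightarrow> 'f) set) = chain_space.span (bd ` faces j L)"
    using assms(1,4) by (intro chain_space.dim_eq_iff_span_eq finite_imageI finite_faces image_mono)
  finally show ?thesis .
qed

lemma betti_eq_0_iff_independent_family:
  fixes L :: "'a::linorder set set" and F :: "'f::field itself"
  assumes "finite L" "faces (j + 1) L = {}"
  shows "betti F j L = 0 \<longleftrightarrow> independent_family scl (bd :: 'a set \<Rightarrow> 'a set \<Rightarrow> 'f) (faces j L)"
proof -
  let ?Z = "{c \<in> chains j L. bd_chain j L c = (0 :: 'a set \<Rightarrow> 'f)}"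
  have "chain_space.dim {0 :: 'a set \<Rightarrow> 'f} = 0"
    using chain_space.dim_le_card[of "{0}" "{}"] by simp
  then have "betti F j L = 0 \<longleftrightarrow> chain_space.dim ?Z = 0"
    unfolding betti_def image_bd_chain[OF assms(1)] by (simp add: assms(2))
  also have "\<dots> \<longleftrightarrow> ?Z \<subseteq> {0}"
  proof (rule chain_space.dim_eq_0_iff)
    show "finite ((\<lambda>\<tau> \<rho>. if \<rho> = \<tau> then 1 else 0 :: 'f) ` faces j L)"
      using assms(1) by (simp add: finite_faces)
    show "?Z \<subseteq> chain_space.span ((\<lambda>\<tau> \<rho>. if \<rho> = \<tau> then 1 else 0) ` faces j L)"
      using chains_subset_span_indicators[OF assms(1), of j] by blast
  qed
  also have "\<dots> \<longleftrightarrow> independent_family scl (bd :: 'a set \<Rightarrow> 'a set \<Rightarrow> 'f) (faces j L)"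
    by (rule cycles_trivial_iff_independent_family)
  finally show ?thesis .
qed

lemma spanning_acycle_iff_basis_subfamily:
  fixes L :: "'a::linorder set set" and F :: "'f::field itself"
  assumes "finite L"
  shows "spanning_acycle F k L S
    \<longleftrightarrow> basis_subfamily scl (bd :: 'a set \<Rightarrow> 'a set \<Rightarrow> 'f) {\<tau> \<in> L. card \<tau> = k + 1} S"
proof (cases "S \<subseteq> {\<tau> \<in> L. card \<tau> = k + 1}")
  case True
  define L' where "L' = skeleton (int k - 1) L \<union> S"
  have "finite L'"
    using assms True by (auto simp: L'_def skeleton_def intro: finite_subset)
  have "faces (int k - 1) L' = faces (int k - 1) L"
    and faces_top: "faces (int k) L' = S" and "faces (int k + 1) L' = {}"
    using True by (auto simp: faces_def L'_def skeleton_def)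
  with assms \<open>finite L'\<close> True show ?thesis
    unfolding spanning_acycle_def basis_subfamily_def L'_def[symmetric]
    by (simp add: betti_eq_iff_span_boundaries_eq betti_eq_0_iff_independent_family faces_nat conj_ac
        flip: faces_top)
qed (simp add: spanning_acycle_def basis_subfamily_def)

lemma MSA_eq_greedy_basis:
  fixes L :: "'a::linorder set set" and F :: "'f::field itself"
  assumes "finite L" "inj_on w {\<tau> \<in> L. card \<tau> = k + 1}"
  shows "MSA F k L w
    = greedy_basis scl (bd :: 'a set \<Rightarrow> 'a set \<Rightarrow> 'f) {\<tau> \<in> L. card \<tau> = k + 1} w"
proof -
  have "finite {\<tau> \<in> L. card \<tau> = k + 1}"
    using assms(1) by simp
  then have "min_spanning_acycle F k L w S
      \<longleftrightarrow> S = greedy_basis scl (bd :: 'a set \<Rightarrow> 'a set \<Rightarrow> 'f) {\<tau> \<in> L. card \<tau> = k + 1} w" for S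
    unfolding min_spanning_acycle_def spanning_acycle_iff_basis_subfamily[OF assms(1)]
    by (rule chain_space.min_weight_basis_subfamily_iff_greedy_basis[OF _ assms(2)])
  then show ?thesis
    unfolding MSA_def by (intro the_equality) simp_all
qed

lemma label_eq_MSA:
  fixes L :: "'a::linorder set set" and F :: "'f::field itself"
  assumes "finite L" "inj_on w {\<tau> \<in> L. card \<tau> = k + 1}" "\<tau> \<in> L" "card \<tau> = k + 1"
  shows "label F L w \<tau> = (if \<tau> \<in> MSA F k L w then -1 else 1)"
proof -
  have "faces (int k) {\<rho> \<in> L. w \<rho> < w \<tau>} = {\<rho> \<in> {\<rho> \<in> L. card \<rho> = k + 1}. w \<rho> < w \<tau>}"
    by (auto simp: faces_def)
  moreover have "int (card \<tau>) - 1 = int k"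
    using assms(4) by simp
  moreover have "finite {\<rho> \<in> L. w \<rho> < w \<tau>}"
    using assms(1) by simp
  ultimately show ?thesis
    using assms by (simp add: label_def image_bd_chain MSA_eq_greedy_basis greedy_basis_def)
qed

lemma label_insert_other_dim:
  assumes "card \<tau> \<noteq> card \<sigma>"
  shows "label F (insert \<sigma> K) w \<tau> = label F K w \<tau>"
proof -
  have same_faces: "faces (int (card \<tau>) - 1) {\<rho> \<in> insert \<sigma> K. w \<rho> < w \<tau>}
      = faces (int (card \<tau>) - 1) {\<rho> \<in> K. w \<rho> < w \<tau>}"
    using assms by (auto simp: faces_def)
  show ?thesis
    unfolding label_def Let_def chains_cong[OF same_faces] bd_chain_cong[OF same_faces] ..
qed

lemma MSA_insert_simplex:
  fixes K :: "'a::linorder set set" and F :: "'f::field itself"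
  assumes "finite K" "card \<sigma> = k + 1" "inj_on w {\<tau> \<in> insert \<sigma> K. card \<tau> = k + 1}"
  shows "MSA F k (insert \<sigma> K) w - MSA F k K w \<subseteq> {\<sigma>}"
    and "card (MSA F k K w - MSA F k (insert \<sigma> K) w) \<le> 1"
    and "\<sigma> \<notin> MSA F k (insert \<sigma> K) w \<Longrightarrow> MSA F k K w = MSA F k (insert \<sigma> K) w"
proof -
  let ?E = "{\<tau> \<in> K. card \<tau> = k + 1}"
  have faces_\<sigma>: "{\<tau> \<in> insert \<sigma> K. card \<tau> = k + 1} = insert \<sigma> ?E"
    using assms(2) by auto
  have inj_\<sigma>: "inj_on w (insert \<sigma> ?E)"
    using assms(3) by (simp only: faces_\<sigma>)
  then have "inj_on w ?E"
    by (rule inj_on_subset) auto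
  then have MSA_K: "MSA F k K w = greedy_basis scl (bd :: 'a set \<Rightarrow> 'a set \<Rightarrow> 'f) ?E w"
    using assms(1) by (intro MSA_eq_greedy_basis)
  have "MSA F k (insert \<sigma> K) w
      = greedy_basis scl (bd :: 'a set \<Rightarrow> 'a set \<Rightarrow> 'f) {\<tau> \<in> insert \<sigma> K. card \<tau> = k + 1} w"
    using assms(1,3) by (intro MSA_eq_greedy_basis) simp_all
  then have MSA_K\<sigma>:
    "MSA F k (insert \<sigma> K) w = greedy_basis scl (bd :: 'a set \<Rightarrow> 'a set \<Rightarrow> 'f) (insert \<sigma> ?E) w"
    by (simp only: faces_\<sigma>)
  show "MSA F k (insert \<sigma> K) w - MSA F k K w \<subseteq> {\<sigma>}"
    unfolding MSA_K MSA_K\<sigma> by (rule chain_space.greedy_basis_insert_diff_subset)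
  show "card (MSA F k K w - MSA F k (insert \<sigma> K) w) \<le> 1"
    unfolding MSA_K MSA_K\<sigma> using assms(1)
    by (intro chain_space.card_greedy_basis_diff_insert_le_1 inj_\<sigma>) simp
  show "MSA F k K w = MSA F k (insert \<sigma> K) w" if "\<sigma> \<notin> MSA F k (insert \<sigma> K) w"
    using that unfolding MSA_K MSA_K\<sigma> by (metis chain_space.greedy_basis_insert_eq)
qed

lemma card_label_changes_le_1:
  fixes K :: "'a::linorder set set" and F :: "'f::field itself"
  assumes "finite K" "\<sigma> \<notin> K" "card \<sigma> = k + 1" "inj_on w {\<tau> \<in> insert \<sigma> K. card \<tau> = k + 1}"
  shows "card {\<tau> \<in> K. label F K w \<tau> \<noteq> label F (insert \<sigma> K) w \<tau>} \<le> 1"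
proof -
  have "inj_on w {\<tau> \<in> K. card \<tau> = k + 1}"
    using assms(4) by (rule inj_on_subset) auto
  have "{\<tau> \<in> K. label F K w \<tau> \<noteq> label F (insert \<sigma> K) w \<tau>} \<subseteq> MSA F k K w - MSA F k (insert \<sigma> K) w"
  proof clarify
    fix \<tau> assume "\<tau> \<in> K" and changed: "label F K w \<tau> \<noteq> label F (insert \<sigma> K) w \<tau>"
    then have "card \<tau> = k + 1"
      using label_insert_other_dim assms(3) by metis
    with changed \<open>\<tau> \<in> K\<close> have "(\<tau> \<in> MSA F k K w) \<noteq> (\<tau> \<in> MSA F k (insert \<sigma> K) w)"
      using assms(1,4) \<open>inj_on w {\<tau> \<in> K. card \<tau> = k + 1}\<close>
      by (simp add: label_eq_MSA split: if_splits)
    moreover have "\<tau> \<noteq> \<sigma>"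
      using \<open>\<tau> \<in> K\<close> assms(2) by blast
    ultimately show "\<tau> \<in> MSA F k K w - MSA F k (insert \<sigma> K) w"
      using MSA_insert_simplex(1)[OF assms(1,3,4), where F=F] by blast
  qed
  moreover have "finite (MSA F k K w)"
    using assms(1) \<open>inj_on w {\<tau> \<in> K. card \<tau> = k + 1}\<close>
    by (simp add: MSA_eq_greedy_basis greedy_basis_def)
  ultimately show ?thesis
    using MSA_insert_simplex(2)[OF assms(1,3,4), where F=F]
    by (meson card_mono finite_Diff order_trans)
qed

theorem lemma3p2:
  fixes K :: "'a::linorder set set" and w :: "'a set \<Rightarrow> real"
    and \<sigma> :: "'a set" and k :: nat and F :: "'f::field itself"
  assumes "weighted_complex K w"
    and "weighted_complex (insert \<sigma> K) w"
    and "\<sigma> \<notin> K"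
    and "card \<sigma> = k + 1"
    and "inj_on w {\<tau> \<in> insert \<sigma> K. card \<tau> = k + 1}"
  shows "card (MSA F k (insert \<sigma> K) w - MSA F k K w) \<le> 1
       \<and> card (MSA F k K w - MSA F k (insert \<sigma> K) w) \<le> 1
       \<and> card {\<tau> \<in> K. label F K w \<tau> \<noteq> label F (insert \<sigma> K) w \<tau>} \<le> 1
       \<and> (label F (insert \<sigma> K) w \<sigma> = 1 \<longrightarrow>
            MSA F k K w = MSA F k (insert \<sigma> K) w \<and>
            (\<forall>\<phi>. strict_mono_on {0..} \<phi> \<and> (\<forall>x\<ge>0. \<phi> x \<ge> 0) \<longrightarrow>
                 Mphi F \<phi> k K w = Mphi F \<phi> k (insert \<sigma> K) w))"
proof -
  have "finite K" "finite (insert \<sigma> K)"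
    using assms(1) by (simp_all add: weighted_complex_def)
  have "card (MSA F k (insert \<sigma> K) w - MSA F k K w) \<le> 1"
    using card_mono[OF _ MSA_insert_simplex(1)[OF \<open>finite K\<close> assms(4,5), where F=F]] by simp
  moreover have "label F (insert \<sigma> K) w \<sigma> = 1 \<Longrightarrow> \<sigma> \<notin> MSA F k (insert \<sigma> K) w"
    using label_eq_MSA[OF \<open>finite (insert \<sigma> K)\<close> assms(5) insertI1 assms(4), where F=F]
    by (simp split: if_splits)
  ultimately show ?thesis
    using MSA_insert_simplex(2,3)[OF \<open>finite K\<close> assms(4,5), where F=F]
      card_label_changes_le_1[OF \<open>finite K\<close> assms(3-5), where F=F]
    by (auto simp: Mphi_def)
qed

end
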